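(* Let $n\ge1$ and $\vec v=(v_1,\dots,v_n)\in\mathbb N_b^n$. Let $k$ be the largest index with $v_k=1$, and put $\vec v_l=(v_1,\dots,v_{k-1})$ and $\vec v_r'=(v_{k+1}-k,\dots,v_n-k)$. Then $\vec v\in\hat N^n$ if and only if $\vec v_l\in\hat N^{k-1}$ and $\vec v_r'\in\hat N^{n-k}$ (here $\hat N^0$ consists only of the empty vector, and a vector with a non-positive coordinate is not in any $\hat N^j$).
   Context: $\mathbb N_b^n=\{(v_1,\dots,v_n)\in\mathbb N^n:\ 1\le v_i\le i\}$. $Y_n$ is the set of planar rooted binary trees with $n$ internal vertices up to isotopy. A complete expression in $x_1,\dots,x_{n+1}$ is a full binary parenthesization of $x_1\cdots x_{n+1}$ (every product of two factors, including the outermost, in parentheses); trees correspond bijectively to complete expressions via $|\mapsto x_1$, $\tau_1\vee\tau_2\mapsto(E_1E_2)$ with consecutive relabelling, where $\tau_1\vee\tau_2$ is the tree with a new root, left subtree $\tau_1$, right subtree $\tau_2$. The name of $\tau\in Y_n$ is the vector $\vec v\in\mathbb N^n$ with $v_i=i$ if at least one left parenthesis stands immediately left of $x_i$ in the complete expression; otherwise the rightmost of the right parentheses immediately following $x_i$ matches a left parenthesis in the run immediately preceding some $x_j$, and $v_i=j$. $\hat N^n$ is the set of names of trees of $Y_n$ ($n\ge1$), and $\hat N^0=\{()\}$ is the name of the trivial tree $|$. *)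

theory Defs
  imports Main
begin

datatype tree = Leaf | Node tree tree

fun internal :: "tree \<Rightarrow> nat" where
  "internal Leaf = 0"
| "internal (Node a b) = Suc (internal a + internal b)"

datatype tok = LP | RP | X

text \<open>The complete expression of a tree (variables are implicitly labelled
  x_1, x_2, ... from left to right).\<close>
fun expr :: "tree \<Rightarrow> tok list" where
  "expr Leaf = [X]"
| "expr (Node a b) = [LP] @ expr a @ expr b @ [RP]"

text \<open>Position (0-based in the token list) of the variable x_i, i >= 1.\<close>
definition xpos :: "tok list \<Rightarrow> nat \<Rightarrow> nat" where
  "xpos e i = [p. p \<leftarrow> [0..<length e], e ! p = X] ! (i - 1)"

definition cnt :: "tok \<Rightarrow> tok list \<Rightarrow> nat" where
  "cnt c xs = length (filter (\<lambda>y. y = c) xs)"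

definition matches :: "tok list \<Rightarrow> nat \<Rightarrow> nat \<Rightarrow> bool" where
  "matches e m q \<longleftrightarrow> m < q \<and> q < length e \<and> e ! m = LP \<and> e ! q = RP \<and>
     (let s = drop m (take (Suc q) e) in
        cnt LP s = cnt RP s \<and>
        (\<forall>l. 0 < l \<and> l < length s \<longrightarrow> cnt RP (take l s) < cnt LP (take l s)))"

definition name_coord :: "tree \<Rightarrow> nat \<Rightarrow> int" where
  "name_coord t i =
     (let e = expr t; p = xpos e i in
      if 0 < p \<and> e ! (p - 1) = LP then int i
      else
        (let q = p + length (takeWhile (\<lambda>y. y = RP) (drop (Suc p) e));
             m = (THE m. matches e m q)
         in int (card {r. r < m \<and> e ! r = X}) + 1))"

definition name :: "tree \<Rightarrow> int list" where
  "name t = map (name_coord t) [1..<Suc (internal t)]"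

definition Nhat :: "nat \<Rightarrow> int list set" where
  "Nhat n = {name t | t. internal t = n}"

text \<open>Bounded vectors N_b^n, as integer lists (0-based index i holds v_(i+1)).\<close>
definition Nb :: "nat \<Rightarrow> int list set" where
  "Nb n = {v. length v = n \<and> (\<forall>i<n. 1 \<le> v ! i \<and> v ! i \<le> int (Suc i))}"

end

theory Submission
  imports Defs
begin

(* The name of a tree is computed compositionally: writing |a| for internal a,
     name (Node a b) = name a @ [1] @ map (\<lambda>x. x + |a| + 1) (name b).
   The variable x_(|a|+1) is the last variable of a, so it either follows the root's
   left parenthesis or its run of right parentheses closes a, which is opened at
   position 1 with no variable to its left; either way its coordinate is 1.  Any other
   variable of a nonleaf subtree is followed, inside that subtree, by a later variable,
   so its run of right parentheses and the matching left parenthesis stay inside the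
   subtree and its coordinate only shifts by the number of variables in front of it.
   Since all coordinates are at least 1, the shifted name of b contains no 1, hence the
   last 1 of a name sits at index |a|, which splits the name into those of a and b. *)

lemma cnt_Nil [simp]: "cnt c [] = 0"
  by (simp add: cnt_def)

lemma cnt_Cons [simp]: "cnt c (y # ys) = (if y = c then 1 else 0) + cnt c ys"
  by (simp add: cnt_def)

lemma cnt_append [simp]: "cnt c (xs @ ys) = cnt c xs + cnt c ys"
  by (simp add: cnt_def)

lemma cnt_take_eq_card: "m \<le> length e \<Longrightarrow> cnt c (take m e) = card {r. r < m \<and> e ! r = c}"
  unfolding cnt_def length_filter_conv_card by (rule arg_cong[where f = card]) auto

lemma cnt_X_expr [simp]: "cnt X (expr t) = Suc (internal t)"
  by (induction t) auto

definition var_pos :: "tok list \<Rightarrow> nat list" where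
  "var_pos e = filter (\<lambda>p. e ! p = X) [0..<length e]"

lemma xpos_var_pos: "xpos e i = var_pos e ! (i - 1)"
proof -
  have "concat (map (\<lambda>p. if P p then [p] else []) xs) = filter P xs" for P and xs :: "nat list"
    by (induction xs) auto
  then show ?thesis unfolding xpos_def var_pos_def by simp
qed

lemma var_pos_append: "var_pos (xs @ ys) = var_pos xs @ map (\<lambda>p. p + length xs) (var_pos ys)"
proof -
  have "[0..<length (xs @ ys)] = [0..<length xs] @ map (\<lambda>p. p + length xs) [0..<length ys]"
    by (simp add: map_add_upt upt_add_eq_append[of 0] ac_simps)
  moreover have "filter (\<lambda>p. (xs @ ys) ! p = X) [0..<length xs] = var_pos xs"
    unfolding var_pos_def by (rule filter_cong) (auto simp: nth_append)
  ultimately show ?thesis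
    unfolding var_pos_def by (simp add: filter_map comp_def nth_append)
qed

lemma length_var_pos: "length (var_pos e) = cnt X e"
proof -
  have "length (var_pos e) = card {r. r < length e \<and> e ! r = X}"
    unfolding var_pos_def length_filter_conv_card by (rule arg_cong[where f = card]) auto
  then show ?thesis using cnt_take_eq_card[of "length e" e X] by simp
qed

lemma var_pos_nth: "j < length (var_pos e) \<Longrightarrow> var_pos e ! j < length e \<and> e ! (var_pos e ! j) = X"
  using nth_mem[of j "var_pos e"] unfolding var_pos_def by simp

lemma sorted_var_pos: "sorted_wrt (<) (var_pos e)"
  unfolding var_pos_def by (rule sorted_wrt_filter) (simp add: sorted_wrt_upt)

lemma xpos_append_context:
  assumes "1 \<le> i" and "i \<le> cnt X ys"
  shows "xpos (pre @ ys @ post) (i + cnt X pre) = xpos ys i + length pre"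
proof -
  have "i + cnt X pre - 1 = length (var_pos pre) + (i - 1)"
    using assms(1) by (simp add: length_var_pos)
  moreover have "i - 1 < length (var_pos ys)"
    using assms by (simp add: length_var_pos)
  ultimately show ?thesis
    by (simp add: xpos_var_pos var_pos_append nth_append)
qed

lemma xpos_var: "1 \<le> i \<Longrightarrow> i \<le> cnt X e \<Longrightarrow> xpos e i < length e \<and> e ! xpos e i = X"
  using var_pos_nth[of "i - 1" e] by (simp add: xpos_var_pos length_var_pos)

lemma var_after_xpos:
  assumes "1 \<le> i" and "i < cnt X e"
  shows "X \<in> set (drop (Suc (xpos e i)) e)"
proof -
  let ?q = "var_pos e ! i"
  have q: "?q < length e" "e ! ?q = X"
    using var_pos_nth[of i e] assms by (simp_all add: length_var_pos)
  have "xpos e i < ?q"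
    using sorted_wrt_nth_less[OF sorted_var_pos, of "i - 1" i e] assms
    by (simp add: xpos_var_pos length_var_pos)
  then have "drop (Suc (xpos e i)) e ! (?q - Suc (xpos e i)) = X"
    and "?q - Suc (xpos e i) < length (drop (Suc (xpos e i)) e)"
    using q by auto
  then show ?thesis by (metis nth_mem)
qed

lemma xpos_expr_pos: "t \<noteq> Leaf \<Longrightarrow> 1 \<le> i \<Longrightarrow> i \<le> Suc (internal t) \<Longrightarrow> 0 < xpos (expr t) i"
  using xpos_var[of i "expr t"] by (cases t) (auto intro: gr0I)

definition balanced :: "tok list \<Rightarrow> bool" where
  "balanced xs \<longleftrightarrow> cnt LP xs = cnt RP xs \<and> (\<forall>l. cnt RP (take l xs) \<le> cnt LP (take l xs))"

lemma balanced_append: "balanced xs \<Longrightarrow> balanced ys \<Longrightarrow> balanced (xs @ ys)"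
  unfolding balanced_def
proof (intro conjI allI; elim conjE)
  fix l
  assume "cnt LP xs = cnt RP xs" and prefix_xs: "\<forall>l. cnt RP (take l xs) \<le> cnt LP (take l xs)"
    and "cnt LP ys = cnt RP ys" and prefix_ys: "\<forall>l. cnt RP (take l ys) \<le> cnt LP (take l ys)"
  then show "cnt LP (xs @ ys) = cnt RP (xs @ ys)" by simp
  have "cnt RP (take (l - length xs) ys) \<le> cnt LP (take (l - length xs) ys)"
    using prefix_ys by blast
  then show "cnt RP (take l (xs @ ys)) \<le> cnt LP (take l (xs @ ys))"
    using \<open>cnt LP xs = cnt RP xs\<close> prefix_xs by (cases "l \<le> length xs") auto
qed

lemma balanced_wrap: "balanced w \<Longrightarrow> balanced (LP # w @ [RP])"
  unfolding balanced_def
proof (intro conjI allI; elim conjE)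
  fix l
  assume eq: "cnt LP w = cnt RP w" and prefix: "\<forall>l. cnt RP (take l w) \<le> cnt LP (take l w)"
  then show "cnt LP (LP # w @ [RP]) = cnt RP (LP # w @ [RP])" by simp
  have "cnt RP (take (l - 1) w) \<le> cnt LP (take (l - 1) w)"
    using prefix by blast
  then show "cnt RP (take l (LP # w @ [RP])) \<le> cnt LP (take l (LP # w @ [RP]))"
    using eq by (cases "l - 1 \<le> length w") (auto simp: take_Cons' not_le)
qed

lemma balanced_expr: "balanced (expr t)"
proof (induction t)
  case Leaf
  then show ?case by (simp add: balanced_def take_Cons')
next
  case (Node a b)
  then show ?case using balanced_wrap[OF balanced_append] by simp
qed

lemma matches_wrap:
  assumes "balanced w"
  shows "matches (LP # w @ [RP]) 0 (Suc (length w))"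
proof -
  have "cnt RP (take l' w) < Suc (cnt LP (take l' w))" for l'
    using assms unfolding balanced_def by (simp add: le_imp_less_Suc)
  then show ?thesis
    using assms unfolding matches_def balanced_def
    by (auto simp: take_Cons' nth_append split: nat.split)
qed

lemma matches_append_context:
  assumes "matches ys m q"
  shows "matches (pre @ ys @ post) (m + length pre) (q + length pre)"
proof -
  have q: "m < q" "q < length ys" using assms unfolding matches_def by auto
  then have "drop (m + length pre) (take (Suc (q + length pre)) (pre @ ys @ post))
      = drop m (take (Suc q) ys)"
    by (simp add: take_append)
  moreover have "(pre @ ys @ post) ! (m + length pre) = ys ! m"
    and "(pre @ ys @ post) ! (q + length pre) = ys ! q"
    using q by (simp_all add: nth_append)
  ultimately show ?thesis
    using assms q unfolding matches_def Let_def by simp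
qed

lemma matches_unique:
  assumes "matches e m q" and "matches e m' q"
  shows "m = m'"
proof -
  have False if m: "matches e m q" and m': "matches e m' q" and "m < m'" for m m'
  proof -
    define s where "s = drop m (take (Suc q) e)"
    define d where "d = m' - m"
    have "q < length e" "m' < q" using m' unfolding matches_def by auto
    then have d: "0 < d" "d < length s" using \<open>m < m'\<close> unfolding d_def s_def by auto
    have "drop m' (take (Suc q) e) = drop d s"
      unfolding s_def d_def using \<open>m < m'\<close> by (simp add: add.commute)
    then have "cnt LP (drop d s) = cnt RP (drop d s)"
      using m' unfolding matches_def Let_def by simp
    moreover have "cnt LP s = cnt RP s" "cnt RP (take d s) < cnt LP (take d s)"
      using m d unfolding matches_def Let_def s_def by auto
    moreover have "s = take d s @ drop d s" by simp
    ultimately show False by (metis add_right_cancel cnt_append less_irrefl)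
  qed
  then show ?thesis using assms by (metis linorder_neqE_nat)
qed

lemma matches_RP_expr:
  "q < length (expr t) \<Longrightarrow> expr t ! q = RP \<Longrightarrow> \<exists>m. matches (expr t) m q"
proof (induction t arbitrary: q)
  case Leaf
  then show ?case by simp
next
  case (Node a b)
  let ?A = "length (expr a)" and ?B = "length (expr b)"
  consider "q = 0" | "0 < q" "q \<le> ?A" | "?A < q" "q \<le> ?A + ?B" | "q = Suc (?A + ?B)"
    using Node.prems(1) by fastforce
  then show ?case
  proof cases
    case 1
    then show ?thesis using Node.prems by simp
  next
    case 2
    then have "q - 1 < ?A" "expr a ! (q - 1) = RP"
      using Node.prems(2) by (auto simp: nth_append nth_Cons split: nat.splits)
    then obtain m where "matches (expr a) m (q - 1)" using Node.IH(1) by blast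
    from matches_append_context[OF this, of "[LP]" "expr b @ [RP]"]
    show ?thesis using 2 by auto
  next
    case 3
    then have "q - Suc ?A < ?B" "\<not> q - 1 < ?A" "q - 1 - ?A = q - Suc ?A"
      by auto
    then have "q - Suc ?A < ?B" "expr b ! (q - Suc ?A) = RP"
      using Node.prems(2) 3 by (auto simp: nth_append)
    then obtain m where "matches (expr b) m (q - Suc ?A)" using Node.IH(2) by blast
    from matches_append_context[OF this, of "LP # expr a" "[RP]"]
    show ?thesis using 3 by (auto simp: Suc_diff_Suc)
  next
    case 4
    then show ?thesis
      using matches_wrap[OF balanced_append[OF balanced_expr balanced_expr], of a b] by auto
  qed
qed

lemma RP_after_var:
  "p < length (expr t) \<Longrightarrow> expr t ! p = X \<Longrightarrow> 0 < p \<Longrightarrow> expr t ! (p - 1) \<noteq> LP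
   \<Longrightarrow> Suc p < length (expr t) \<and> expr t ! Suc p = RP"
proof (induction t arbitrary: p)
  case Leaf
  then show ?case by simp
next
  case (Node a b)
  let ?A = "length (expr a)"
  obtain p' where p: "p = Suc p'" using Node.prems(3) by (cases p) auto
  consider (left) "p' < ?A" | (middle) "p' = ?A" | (right) "?A < p'"
    by linarith
  then show ?case
  proof cases
    case left
    obtain p'' where "p' = Suc p''"
      using Node.prems(4) p by (cases p') auto
    then have "Suc p' < ?A \<and> expr a ! Suc p' = RP"
      using Node.prems Node.IH(1)[of p'] left p by (auto simp: nth_append)
    then show ?thesis using p by (simp add: nth_append)
  next
    case middle
    then have "b = Leaf"
      using Node.prems(2) p by (cases b) (auto simp: nth_append)
    then show ?thesis using middle p by (simp add: nth_append)
  next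
    case right
    then obtain j where p': "p' = Suc (?A + j)"
      using less_imp_Suc_add by blast
    have j: "Suc j < length (expr b)"
      using Node.prems(1,2) p p' by (cases "Suc j < length (expr b)") (auto simp: nth_append)
    moreover have "expr b ! j \<noteq> LP"
      using Node.prems(4) p p' j by (simp add: nth_append)
    ultimately have "Suc (Suc j) < length (expr b) \<and> expr b ! Suc (Suc j) = RP"
      using Node.prems(2) Node.IH(2)[of "Suc j"] p p' by (simp add: nth_append)
    then show ?thesis using p p' by (simp add: nth_append)
  qed
qed

lemma expr_last_var:
  "\<exists>u r. expr t = u @ X # replicate r RP \<and> cnt X u = internal t \<and>
     (t \<noteq> Leaf \<longrightarrow> u \<noteq> [] \<and> last u \<noteq> LP)"
proof (induction t)
  case Leaf
  show ?case by (intro exI[of _ "[]"] exI[of _ 0]) simp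
next
  case (Node a b)
  obtain u r where u: "expr b = u @ X # replicate r RP" "cnt X u = internal b"
    "b \<noteq> Leaf \<longrightarrow> u \<noteq> [] \<and> last u \<noteq> LP"
    using Node.IH(2) by blast
  have "last (LP # expr a @ u) \<noteq> LP"
  proof (cases "u = []")
    case True
    then show ?thesis by (cases a) auto
  next
    case False
    then have "b \<noteq> Leaf" using u(1) by (cases b) (auto dest: arg_cong[where f = length])
    then show ?thesis using u(3) False by simp
  qed
  moreover have "expr (Node a b) = (LP # expr a @ u) @ X # replicate (Suc r) RP"
    using u(1) by (simp add: replicate_append_same[symmetric])
  ultimately show ?case using u(2) by fastforce
qed

definition rp_run :: "tok list \<Rightarrow> nat \<Rightarrow> nat" where
  "rp_run e p = length (takeWhile (\<lambda>y. y = RP) (drop (Suc p) e))"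

lemma rp_run_prepend [simp]: "rp_run (pre @ e) (p + length pre) = rp_run e p"
  by (simp add: rp_run_def)

lemma rp_run_append: "X \<in> set (drop (Suc p) e) \<Longrightarrow> rp_run (e @ post) p = rp_run e p"
proof -
  assume X: "X \<in> set (drop (Suc p) e)"
  then have "Suc p < length e"
    by (metis drop_eq_Nil empty_iff empty_set not_le)
  then show ?thesis using X by (simp add: rp_run_def)
qed

lemma rp_run_closing:
  assumes "Suc p < length e" and "e ! Suc p = RP"
  shows "p + rp_run e p < length e \<and> e ! (p + rp_run e p) = RP"
proof -
  let ?tw = "takeWhile (\<lambda>y. y = RP) (drop (Suc p) e)"
  have "drop (Suc p) e = RP # drop (Suc (Suc p)) e"
    using assms Cons_nth_drop_Suc[of "Suc p" e] by simp
  then have run: "rp_run e p = Suc (length (takeWhile (\<lambda>y. y = RP) (drop (Suc (Suc p)) e)))"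
    by (simp add: rp_run_def)
  have "rp_run e p \<le> length e - Suc p"
    unfolding rp_run_def by (metis length_drop length_takeWhile_le)
  moreover have "?tw ! (rp_run e p - 1) \<in> set ?tw"
    using run by (simp add: rp_run_def)
  then have "?tw ! (rp_run e p - 1) = RP"
    by (metis (mono_tags) set_takeWhileD)
  moreover have "?tw ! (rp_run e p - 1) = e ! (p + rp_run e p)"
    using run assms(1) by (simp add: takeWhile_nth rp_run_def)
  ultimately show ?thesis using assms(1) run by simp
qed

definition coord :: "tok list \<Rightarrow> nat \<Rightarrow> int" where
  "coord e i =
     (let p = xpos e i in
      if 0 < p \<and> e ! (p - 1) = LP then int i
      else int (card {r. r < (THE m. matches e m (p + rp_run e p)) \<and> e ! r = X}) + 1)"

lemma name_coord_eq_coord: "name_coord t i = coord (expr t) i"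
  by (simp add: name_coord_def coord_def rp_run_def Let_def)

lemma coord_after_LP: "0 < xpos e i \<Longrightarrow> e ! (xpos e i - 1) = LP \<Longrightarrow> coord e i = int i"
  by (simp add: coord_def)

lemma coord_matched:
  assumes "\<not> (0 < xpos e i \<and> e ! (xpos e i - 1) = LP)"
    and "matches e m (xpos e i + rp_run e (xpos e i))"
  shows "coord e i = int (cnt X (take m e)) + 1"
proof -
  have "(THE m. matches e m (xpos e i + rp_run e (xpos e i))) = m"
    using assms(2) matches_unique by blast
  moreover have "m \<le> length e"
    using assms(2) unfolding matches_def by simp
  ultimately show ?thesis
    using assms(1) by (auto simp: coord_def Let_def cnt_take_eq_card)
qed

lemma coord_ge_1: "1 \<le> i \<Longrightarrow> 1 \<le> coord e i"
  by (simp add: coord_def Let_def)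

lemma matches_expr_Node: "matches (expr (Node a b)) 0 (Suc (length (expr a) + length (expr b)))"
  using matches_wrap[OF balanced_append[OF balanced_expr balanced_expr], of a b] by simp

lemma coord_append_context:
  assumes "t \<noteq> Leaf" and i: "1 \<le> i" "i \<le> internal t"
  shows "coord (pre @ expr t @ post) (i + cnt X pre) = coord (expr t) i + int (cnt X pre)"
proof -
  define ys where "ys = expr t"
  define e where "e = pre @ ys @ post"
  define p where "p = xpos ys i"
  have pe: "xpos e (i + cnt X pre) = p + length pre"
    using xpos_append_context[of i ys] i by (simp add: e_def p_def ys_def)
  have p: "0 < p" "p < length ys" "ys ! p = X"
    using xpos_expr_pos[OF assms(1)] xpos_var[of i ys] i by (simp_all add: p_def ys_def)
  then have prev: "e ! (p + length pre - 1) = ys ! (p - 1)"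
    by (cases p) (simp_all add: e_def nth_append)
  show ?thesis
  proof (cases "ys ! (p - 1) = LP")
    case True
    then show ?thesis
      using coord_after_LP[of e] coord_after_LP[of ys i] pe prev p by (simp add: e_def ys_def p_def)
  next
    case False
    have "Suc p < length ys" "ys ! Suc p = RP"
      using RP_after_var[of p t] p False by (simp_all add: ys_def)
    then have "p + rp_run ys p < length ys" "ys ! (p + rp_run ys p) = RP"
      using rp_run_closing by blast+
    then obtain m where m: "matches ys m (p + rp_run ys p)"
      using matches_RP_expr by (auto simp: ys_def)
    have "X \<in> set (drop (Suc p) ys)"
      using var_after_xpos[of i ys] i by (simp add: p_def ys_def)
    then have run: "rp_run e (p + length pre) = rp_run ys p"
      using rp_run_append unfolding e_def by (metis rp_run_prepend)
    have "coord e (i + cnt X pre) = int (cnt X (take (m + length pre) e)) + 1"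
      using coord_matched[of e] matches_append_context[OF m, of pre post] pe prev False run
      by (simp add: e_def ac_simps)
    moreover have "coord ys i = int (cnt X (take m ys)) + 1"
      using coord_matched[of ys i m] m False by (simp add: p_def)
    moreover have "m < length ys"
      using m unfolding matches_def by simp
    ultimately show ?thesis by (simp add: e_def ys_def)
  qed
qed

lemma name_coord_Node_middle: "name_coord (Node a b) (Suc (internal a)) = 1"
proof (cases a)
  case Leaf
  have "xpos ([LP] @ [X] @ expr b @ [RP]) (1 + cnt X [LP]) = xpos [X] 1 + length [LP]"
    by (rule xpos_append_context) simp_all
  then have "xpos (expr (Node a b)) 1 = 1"
    using Leaf by (simp add: xpos_def)
  then show ?thesis
    using Leaf coord_after_LP[of "expr (Node a b)" 1] by (simp add: name_coord_eq_coord)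
next
  case (Node a1 a2)
  obtain u r where u: "expr a = u @ X # replicate r RP" "cnt X u = internal a"
    "u \<noteq> []" "last u \<noteq> LP"
    using expr_last_var[of a] Node by auto
  define rest where "rest = replicate r RP @ expr b @ [RP]"
  define e where "e = expr (Node a b)"
  have e: "e = (LP # u) @ [X] @ rest"
    using u(1) by (simp add: e_def rest_def)
  have "xpos ((LP # u) @ [X] @ rest) (1 + cnt X (LP # u)) = xpos [X] 1 + length (LP # u)"
    by (rule xpos_append_context) simp_all
  then have p: "xpos e (Suc (internal a)) = Suc (length u)"
    using u(2) e by (simp add: xpos_def)
  have prev: "e ! length u = last u"
    using u(3) e by (simp add: nth_append last_conv_nth)
  have "takeWhile (\<lambda>y. y = RP) (expr b @ [RP]) = []"
    by (cases b) auto
  then have "takeWhile (\<lambda>y. y = RP) rest = replicate r RP"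
    unfolding rest_def by (subst takeWhile_append2) auto
  then have run: "rp_run e (Suc (length u)) = r"
    using e by (simp add: rp_run_def)
  have "length u + r = Suc (length (expr a1) + length (expr a2))"
    using arg_cong[OF u(1), of length] Node by simp
  then have "matches (expr a) 0 (length u + r)"
    using matches_expr_Node[of a1 a2] Node by simp
  from matches_append_context[OF this, of "[LP]" "expr b @ [RP]"]
  have "matches e 1 (Suc (length u) + r)"
    by (simp add: e_def)
  then have "coord e (Suc (internal a)) = int (cnt X (take 1 e)) + 1"
    using coord_matched[of e] p prev u(4) run by simp
  then show ?thesis
    by (simp add: name_coord_eq_coord e_def)
qed

lemma name_Node: "name (Node a b) = name a @ [1] @ map (\<lambda>x. x + int (Suc (internal a))) (name b)"
proof -
  have "[1..<Suc (Suc (x + y))] = [1..<Suc x] @ [Suc x] @ map (\<lambda>j. j + Suc x) [1..<Suc y]" for x y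
    by (induction y) auto
  then have split: "name (Node a b) = map (name_coord (Node a b)) [1..<Suc (internal a)]
      @ [name_coord (Node a b) (Suc (internal a))]
      @ map (\<lambda>j. name_coord (Node a b) (j + Suc (internal a))) [1..<Suc (internal b)]"
    unfolding name_def by simp
  have "name_coord (Node a b) i = name_coord a i" if "1 \<le> i" "i \<le> internal a" for i
    using coord_append_context[of a i "[LP]" "expr b @ [RP]"] that
    by (cases a) (simp_all add: name_coord_eq_coord)
  then have left: "map (name_coord (Node a b)) [1..<Suc (internal a)] = name a"
    unfolding name_def by (intro map_cong) auto
  have "name_coord (Node a b) (j + Suc (internal a)) = name_coord b j + int (Suc (internal a))"
    if "1 \<le> j" "j \<le> internal b" for j
    using coord_append_context[of b j "LP # expr a" "[RP]"] that
    by (cases b) (simp_all add: name_coord_eq_coord)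
  then have right: "map (\<lambda>j. name_coord (Node a b) (j + Suc (internal a))) [1..<Suc (internal b)]
      = map (\<lambda>x. x + int (Suc (internal a))) (name b)"
    unfolding name_def map_map by (intro map_cong) auto
  show ?thesis
    unfolding split left right name_coord_Node_middle by simp
qed

lemma length_name [simp]: "length (name t) = internal t"
  by (simp add: name_def)

lemma name_nth_ge_1: "j < internal t \<Longrightarrow> 1 \<le> name t ! j"
  by (simp add: name_def name_coord_eq_coord coord_ge_1 del: upt_Suc)

lemma Greatest_name_Node:
  "(GREATEST i. i < internal (Node a b) \<and> name (Node a b) ! i = 1) = internal a"
proof (rule Greatest_equality)
  show "internal a < internal (Node a b) \<and> name (Node a b) ! internal a = 1"
    by (simp add: name_Node nth_append)
next
  fix i
  assume i: "i < internal (Node a b) \<and> name (Node a b) ! i = 1"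
  show "i \<le> internal a"
  proof (rule ccontr)
    assume "\<not> i \<le> internal a"
    then obtain j where j: "i = Suc (internal a + j)"
      using less_imp_Suc_add not_le by blast
    have jb: "j < internal b"
      using i j by simp
    then have "name (Node a b) ! i = name b ! j + int (Suc (internal a))"
      using j by (simp add: name_Node nth_append)
    then show False
      using i name_nth_ge_1[OF jb] by simp
  qed
qed

theorem mainTheorem5:
  fixes n :: nat and v :: "int list" and k :: nat
  assumes "n \<ge> 1" and "v \<in> Nb n"
    and "k = Suc (GREATEST i. i < n \<and> v ! i = 1)"
  shows "v \<in> Nhat n \<longleftrightarrow>
           take (k - 1) v \<in> Nhat (k - 1) \<and>
           map (\<lambda>x. x - int k) (drop k v) \<in> Nhat (n - k)"
proof
  assume "v \<in> Nhat n"
  then obtain t where "v = name t" "n = internal t"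
    unfolding Nhat_def by auto
  with \<open>n \<ge> 1\<close> obtain a b where v: "v = name (Node a b)" and n: "n = internal (Node a b)"
    by (cases t) auto
  then have k: "k = Suc (internal a)"
    using assms(3) Greatest_name_Node by simp
  then have "take (k - 1) v = name a" "map (\<lambda>x. x - int k) (drop k v) = name b"
    using v by (simp_all add: name_Node comp_def)
  then show "take (k - 1) v \<in> Nhat (k - 1) \<and> map (\<lambda>x. x - int k) (drop k v) \<in> Nhat (n - k)"
    unfolding Nhat_def using n k by auto
next
  assume "take (k - 1) v \<in> Nhat (k - 1) \<and> map (\<lambda>x. x - int k) (drop k v) \<in> Nhat (n - k)"
  then obtain a b where a: "name a = take (k - 1) v" "internal a = k - 1"
    and b: "name b = map (\<lambda>x. x - int k) (drop k v)" "internal b = n - k"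
    unfolding Nhat_def by auto
  have "length v = n" and "v ! 0 = 1"
    using assms(1,2) unfolding Nb_def by force+
  then have "k - 1 < n \<and> v ! (k - 1) = 1"
    using GreatestI_nat[of "\<lambda>i. i < n \<and> v ! i = 1" 0 n] assms(1,3) by simp
  then have "name (Node a b) = v" and "internal (Node a b) = n"
    using a b id_take_nth_drop[of "k - 1" v] \<open>length v = n\<close> assms(3)
    by (simp_all add: name_Node comp_def)
  then show "v \<in> Nhat n"
    unfolding Nhat_def by blast
qed

end
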